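(* Let $\hat x\in\mathcal{X}$, $\hat y:=K\hat x$, and let the measurements be $Y_i=\hat y+E_i$, $i=1,2,\dots$, where $E_1,E_2,\dots$ are i.i.d. $\mathcal{Y}$-valued random variables whose distribution does not depend on $\hat x$, with $\mathbb{E}[E_1]=0$ and $\mathbb{E}\|E_1\|^2<\infty$. Assume there are $q>0$, $p>1$ with $\sigma_j^2\asymp j^{-q}$ and $\mathbb{E}(E_1,u_j)^2\asymp j^{-p}$. Let $\nu,\rho>0$. Then, as $n\to\infty$, $$\inf_{k\ge 1}\sup_{\hat x\in\mathcal{X}_{\nu,\rho}}\mathbb{E}\|\bar X^n_k-\hat x\|^2\asymp\begin{cases}\frac1n & q-p<-1,\\ \frac{\log(n\rho)}{n} & q-p=-1,\\ \rho^{\frac{q+1-p}{(\nu+1)q+1-p}}\left(\frac1n\right)^{\frac{\nu}{\nu+1-\frac{p-1}{q}}} & q-p>-1.\end{cases}$$ Moreover, for any choice of truncation levels $$k_n\asymp\begin{cases}(\rho n)^{\frac{1}{\nu q}} & q-p\le -1,\\ (\rho n)^{\frac{1}{(1+\nu)q+1-p}} & q-p>-1,\end{cases}$$ one has $\sup_{\hat x\in\mathcal{X}_{\nu,\rho}}\mathbb{E}\|\bar X^n_{k_n}-\hat x\|^2\asymp\inf_{k\ge1}\sup_{\hat x\in\mathcal{X}_{\nu,\rho}}\mathbb{E}\|\bar X^n_k-\hat x\|^2$.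
   Context: $\mathcal{X},\mathcal{Y}$ are infinite-dimensional real separable Hilbert spaces and $K:\mathcal{X}\to\mathcal{Y}$ is a compact linear operator with dense range, with singular value decomposition $(\sigma_j,u_j,v_j)_{j\in\mathbb{N}}$: $(u_j)$ is an orthonormal basis of $\mathcal{Y}$, $(v_j)$ an orthonormal basis of $\mathcal{N}(K)^\perp$, $(\sigma_j)$ is a nonincreasing sequence of positive numbers converging to $0$, and $Kv_j=\sigma_ju_j$. For $\nu,\rho>0$ the source set is $\mathcal{X}_{\nu,\rho}:=\{(K^*K)^{\nu/2}\xi:\xi\in\mathcal{X},\|\xi\|\le\rho\}=\{\sum_{j}\sigma_j^\nu(\xi,v_j)v_j:\|\xi\|\le\rho\}$. Given measurements $Y_1,\dots,Y_n$, $\bar Y_n:=\frac1n\sum_{i=1}^nY_i$ and the spectral cut-off estimator at level $k$ is $\bar X^n_k:=\sum_{j=1}^k\sigma_j^{-1}(\bar Y_n,u_j)v_j$. For positive sequences, $a_j\asymp b_j$ means $c\,b_j\le a_j\le C\,b_j$ for constants $0<c\le C$ independent of the index; in the conclusion the constants are independent of $n$ (they may depend on $p,q,\nu,\rho$ and the noise distribution). *)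

theory Defs
  imports "HOL-Probability.Probability"
begin

definition asymp_all :: "(nat \<Rightarrow> real) \<Rightarrow> (nat \<Rightarrow> real) \<Rightarrow> bool" where
  "asymp_all f g \<longleftrightarrow> (\<exists>c C. 0 < c \<and> c \<le> C \<and> (\<forall>j. c * g j \<le> f j \<and> f j \<le> C * g j))"

definition asymp_ev :: "(nat \<Rightarrow> real) \<Rightarrow> (nat \<Rightarrow> real) \<Rightarrow> bool" where
  "asymp_ev f g \<longleftrightarrow> (\<exists>c C. 0 < c \<and> c \<le> C \<and>
       (\<forall>\<^sub>F n in sequentially. c * g n \<le> f n \<and> f n \<le> C * g n))"

definition orthonormal_seq :: "(nat \<Rightarrow> 'a::real_inner) \<Rightarrow> bool" where
  "orthonormal_seq e \<longleftrightarrow> (\<forall>i j. inner (e i) (e j) = (if i = j then 1 else 0))"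

definition orthonormal_basis_of :: "(nat \<Rightarrow> 'a::real_inner) \<Rightarrow> 'a set \<Rightarrow> bool" where
  "orthonormal_basis_of e S \<longleftrightarrow> orthonormal_seq e \<and> closure (span (range e)) = S"

definition ker_perp :: "('x::real_inner \<Rightarrow> 'y::real_vector) \<Rightarrow> 'x set" where
  "ker_perp K = {x. \<forall>z. K z = 0 \<longrightarrow> inner x z = 0}"

definition source_set :: "(nat \<Rightarrow> real) \<Rightarrow> (nat \<Rightarrow> 'x::real_inner) \<Rightarrow> real \<Rightarrow> real \<Rightarrow> 'x set" where
  "source_set \<sigma> v \<nu> \<rho> =
     {x. \<exists>\<xi>. norm \<xi> \<le> \<rho> \<and> (\<lambda>j. (\<sigma> j powr \<nu> * inner \<xi> (v j)) *\<^sub>R v j) sums x}"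

text \<open>Sample mean of Y_i = K xh + E_i, i = 1..n (indices shifted to 0..n-1).\<close>
definition Ybar :: "('x \<Rightarrow> 'y::real_vector) \<Rightarrow> (nat \<Rightarrow> 'w \<Rightarrow> 'y) \<Rightarrow> 'x \<Rightarrow> nat \<Rightarrow> 'w \<Rightarrow> 'y" where
  "Ybar K E xh n \<omega> = (1 / real n) *\<^sub>R (\<Sum>i<n. K xh + E i \<omega>)"

definition sc_est :: "('x::real_vector \<Rightarrow> 'y::real_inner) \<Rightarrow> (nat \<Rightarrow> real) \<Rightarrow> (nat \<Rightarrow> 'y) \<Rightarrow> (nat \<Rightarrow> 'x)
    \<Rightarrow> (nat \<Rightarrow> 'w \<Rightarrow> 'y) \<Rightarrow> 'x \<Rightarrow> nat \<Rightarrow> nat \<Rightarrow> 'w \<Rightarrow> 'x" where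
  "sc_est K \<sigma> u v E xh n k \<omega> = (\<Sum>j<k. (inverse (\<sigma> j) * inner (Ybar K E xh n \<omega>) (u j)) *\<^sub>R v j)"

definition sc_risk :: "'w measure \<Rightarrow> ('x::real_inner \<Rightarrow> 'y::real_inner) \<Rightarrow> (nat \<Rightarrow> real) \<Rightarrow> (nat \<Rightarrow> 'y) \<Rightarrow> (nat \<Rightarrow> 'x)
    \<Rightarrow> (nat \<Rightarrow> 'w \<Rightarrow> 'y) \<Rightarrow> 'x \<Rightarrow> nat \<Rightarrow> nat \<Rightarrow> real" where
  "sc_risk M K \<sigma> u v E xh n k = (\<integral>\<omega>. (norm (sc_est K \<sigma> u v E xh n k \<omega> - xh))\<^sup>2 \<partial>M)"

end

theory Submission
  imports Defs "HOL-Real_Asymp.Real_Asymp"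
begin

text \<open>The mean squared error of the cut-off at level \<open>k\<close> is squared bias plus variance. Over the
  source set the worst squared bias is exactly \<open>\<rho>\<^sup>2 * \<sigma> k powr (2 * \<nu>)\<close>, attained at a multiple
  of \<open>v k\<close>, hence of order \<open>k powr (- q * \<nu>)\<close>; by independence the variance is
  \<open>(\<Sum>j<k. E (E\<^sub>1, u j)\<^sup>2 / \<sigma> j\<^sup>2) / n\<close>, of order \<open>(\<Sum>j<k. (j + 1) powr (q - p)) / n\<close>. That sum is
  bounded, logarithmic, or of order \<open>k powr (q - p + 1)\<close> according as \<open>q - p\<close> is below, equal to,
  or above \<open>-1\<close>. Balancing the two terms gives the three rates: no level beats them by more than a
  constant factor, and every level comparable to the balancing level attains them.\<close>

section \<open>Comparability of sequences\<close>

lemma asymp_allI: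
  assumes "0 < c" "c \<le> C" "\<And>j. c * g j \<le> f j" "\<And>j. f j \<le> C * g j"
  shows "asymp_all f g"
  using assms unfolding asymp_all_def by blast

lemma asymp_allE:
  assumes "asymp_all f g"
  obtains c C where "0 < c" "c \<le> C" "\<And>j. c * g j \<le> f j" "\<And>j. f j \<le> C * g j"
proof -
  from assms obtain c C where "0 < c" "c \<le> C" "\<forall>j. c * g j \<le> f j \<and> f j \<le> C * g j"
    unfolding asymp_all_def by blast
  then show thesis using that by blast
qed

lemma asymp_all_mult_left:
  assumes "asymp_all f g" "a > 0"
  shows "asymp_all (\<lambda>j. a * f j) g"
proof -
  obtain c C where "0 < c" "c \<le> C" "\<And>j. c * g j \<le> f j" "\<And>j. f j \<le> C * g j"
    using asymp_allE[OF assms(1)] by blast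
  with assms(2) show ?thesis
    by (intro asymp_allI[of "a * c" "a * C"]) (auto simp: mult.assoc)
qed

lemma asymp_all_divide:
  assumes "asymp_all f g" "asymp_all f' g'" "\<And>j. g j > 0" "\<And>j. g' j > 0"
  shows "asymp_all (\<lambda>j. f j / f' j) (\<lambda>j. g j / g' j)"
proof -
  obtain c C where c: "0 < c" "c \<le> C" and f: "\<And>j. c * g j \<le> f j" "\<And>j. f j \<le> C * g j"
    using asymp_allE[OF assms(1)] by blast
  obtain c' C' where c': "0 < c'" "c' \<le> C'" and f': "\<And>j. c' * g' j \<le> f' j" "\<And>j. f' j \<le> C' * g' j"
    using asymp_allE[OF assms(2)] by blast
  have f_pos: "f j > 0" and f'_pos: "f' j > 0" for j
    using f(1)[of j] f'(1)[of j] mult_pos_pos[OF c(1) assms(3)] mult_pos_pos[OF c'(1) assms(4)]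
    by (auto intro: less_le_trans)
  have "c / C' * (g j / g' j) \<le> f j / f' j" for j
  proof -
    have "c / C' * (g j / g' j) = (c * g j) / (C' * g' j)" by simp
    also have "\<dots> \<le> f j / f' j"
      using f(1) f'(2) f_pos f'_pos c assms(3,4) by (intro frac_le) (auto simp: less_imp_le)
    finally show ?thesis .
  qed
  moreover have "f j / f' j \<le> C / c' * (g j / g' j)" for j
  proof -
    have "f j / f' j \<le> (C * g j) / (c' * g' j)"
      using f(2)[of j] f'(1)[of j] f_pos[of j] c' assms(4)[of j] by (intro frac_le) auto
    also have "\<dots> = C / c' * (g j / g' j)" by simp
    finally show ?thesis .
  qed
  moreover have "c / C' \<le> C / c'"
    using c c' by (intro frac_le) auto
  ultimately show ?thesis
    using c c' by (intro asymp_allI) auto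
qed

lemma asymp_all_powr:
  assumes "asymp_all f g" "\<And>j. g j > 0" "a \<ge> 0"
  shows "asymp_all (\<lambda>j. f j powr a) (\<lambda>j. g j powr a)"
proof -
  obtain c C where c: "0 < c" "c \<le> C" and f: "\<And>j. c * g j \<le> f j" "\<And>j. f j \<le> C * g j"
    using asymp_allE[OF assms(1)] by blast
  have f_pos: "f j > 0" for j
    using f(1)[of j] mult_pos_pos[OF c(1) assms(2)] by (auto intro: less_le_trans)
  have "c powr a * g j powr a \<le> f j powr a" for j
    using f(1)[of j] c assms(2)[of j] assms(3) by (simp add: powr_mult[symmetric] powr_mono2)
  moreover have "f j powr a \<le> C powr a * g j powr a" for j
    using f(2)[of j] f_pos[of j] c assms(2)[of j] assms(3) by (simp add: powr_mult[symmetric] powr_mono2)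
  ultimately show ?thesis
    using c assms(3) by (intro asymp_allI[of "c powr a" "C powr a"]) (auto intro: powr_mono2)
qed

lemma asymp_all_sum:
  assumes "asymp_all f g"
  shows "asymp_all (\<lambda>k. \<Sum>j<k. f j) (\<lambda>k. \<Sum>j<k. g j)"
proof -
  obtain c C where c: "0 < c" "c \<le> C" and f: "\<And>j. c * g j \<le> f j" "\<And>j. f j \<le> C * g j"
    using asymp_allE[OF assms] by blast
  show ?thesis
    using c f by (intro asymp_allI[of c C]) (auto simp: sum_distrib_left intro: sum_mono)
qed

section \<open>Sums of powers\<close>

lemma Suc_powr_increment:
  fixes r :: real
  assumes "r > -1" "j \<ge> 1"
  obtains z where "real j < z" "z < real (Suc j)"
    "real (Suc j) powr (r + 1) - real j powr (r + 1) = (r + 1) * z powr r"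
proof -
  have "\<exists>z>real j. z < real j + 1 \<and>
      (real j + 1) powr (r + 1) - real j powr (r + 1) = (real j + 1 - real j) * ((r + 1) * z powr r)"
    using assms by (intro MVT2) (auto intro!: derivative_eq_intros)
  then obtain z where "real j < z" "z < real j + 1"
    "(real j + 1) powr (r + 1) - real j powr (r + 1) = (r + 1) * z powr r"
    by auto
  then show ?thesis by (intro that[of z]) (simp_all add: add.commute)
qed

lemma Suc_powr_increment_le:
  fixes r :: real
  assumes "r \<ge> 0"
  shows "real (Suc j) powr (r + 1) - real j powr (r + 1) \<le> (r + 1) * real (Suc j) powr r"
proof (cases "j = 0")
  case False
  then obtain z where z: "real j < z" "z < real (Suc j)"
    "real (Suc j) powr (r + 1) - real j powr (r + 1) = (r + 1) * z powr r"
    using Suc_powr_increment[of r j] assms False by auto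
  have "z powr r \<le> real (Suc j) powr r"
    using z assms by (intro powr_mono2) auto
  then show ?thesis using z assms by simp
qed (use assms in simp)

lemma Suc_powr_increment_ge:
  fixes r :: real
  assumes "-1 < r" "r < 0"
  shows "(r + 1) * real (Suc j) powr r \<le> real (Suc j) powr (r + 1) - real j powr (r + 1)"
proof (cases "j = 0")
  case False
  then obtain z where z: "real j < z" "z < real (Suc j)"
    "real (Suc j) powr (r + 1) - real j powr (r + 1) = (r + 1) * z powr r"
    using Suc_powr_increment[of r j] assms False by auto
  have "real (Suc j) powr r \<le> z powr r"
    using z assms by (intro powr_mono2') auto
  then show ?thesis using z assms by simp
qed (use assms in simp)

lemma sum_Suc_powr_increment: "(\<Sum>j<k. real (Suc j) powr s - real j powr s) = real k powr s"
  using sum_lessThan_telescope[of "\<lambda>j. real j powr s" k] by simp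

lemma sum_Suc_powr_const_le:
  fixes r :: real
  assumes "r \<ge> 0"
  shows "(\<Sum>j<k. real (Suc j) powr r) \<le> real k powr (r + 1)"
proof -
  have "(\<Sum>j<k. real (Suc j) powr r) \<le> (\<Sum>j<k. real k powr r)"
    using assms by (intro sum_mono powr_mono2) auto
  also have "\<dots> = real k powr (r + 1)" by (cases "k = 0") (simp_all add: powr_add)
  finally show ?thesis .
qed

lemma sum_Suc_powr_asymp:
  fixes r :: real
  assumes "r > -1"
  shows "asymp_all (\<lambda>k. \<Sum>j<k. real (Suc j) powr r) (\<lambda>k. real k powr (r + 1))"
proof (cases "r \<ge> 0")
  case True
  have "real k powr (r + 1) \<le> (r + 1) * (\<Sum>j<k. real (Suc j) powr r)" for k
  proof -
    have "real k powr (r + 1) = (\<Sum>j<k. real (Suc j) powr (r + 1) - real j powr (r + 1))"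
      by (rule sum_Suc_powr_increment[symmetric])
    also have "\<dots> \<le> (\<Sum>j<k. (r + 1) * real (Suc j) powr r)"
      using True by (intro sum_mono Suc_powr_increment_le)
    finally show ?thesis by (simp add: sum_distrib_left)
  qed
  then show ?thesis
    using True sum_Suc_powr_const_le[OF True]
    by (intro asymp_allI[of "1 / (r + 1)" 1]) (auto simp: field_simps)
next
  case False
  have "(r + 1) * (\<Sum>j<k. real (Suc j) powr r) \<le> real k powr (r + 1)" for k
  proof -
    have "(\<Sum>j<k. (r + 1) * real (Suc j) powr r) \<le> (\<Sum>j<k. real (Suc j) powr (r + 1) - real j powr (r + 1))"
      using False assms by (intro sum_mono Suc_powr_increment_ge) auto
    then show ?thesis by (simp only: sum_Suc_powr_increment sum_distrib_left)
  qed
  moreover have "real k powr (r + 1) \<le> (\<Sum>j<k. real (Suc j) powr r)" for k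
  proof -
    have "(\<Sum>j<k. real k powr r) \<le> (\<Sum>j<k. real (Suc j) powr r)"
      using False by (intro sum_mono powr_mono2') auto
    then show ?thesis by (cases "k = 0") (simp_all add: powr_add mult.commute)
  qed
  ultimately show ?thesis
    using assms False by (intro asymp_allI[of 1 "1 / (r + 1)"]) (auto simp: field_simps)
qed

lemma sum_Suc_powr_minus_one: "(\<Sum>j<k. real (Suc j) powr (-1)) = harm k"
  by (simp add: harm_altdef powr_minus_divide divide_inverse)

lemma harm_le_one_plus_ln: "n \<ge> 1 \<Longrightarrow> harm n \<le> 1 + ln (real n)"
  using euler_mascheroni_sequence_decreasing[of 1 n] by (simp add: harm_def)

lemma sum_Suc_powr_bounded:
  fixes r :: real
  assumes "r < -1"
  obtains S where "\<And>k. (\<Sum>j<k. real (Suc j) powr r) \<le> S"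
proof
  have "summable (\<lambda>j. real j powr r)"
    using assms summable_real_powr_iff by blast
  then have "summable (\<lambda>j. real (Suc j) powr r)"
    using summable_Suc_iff[of "\<lambda>j. real j powr r"] by simp
  then show "(\<Sum>j<k. real (Suc j) powr r) \<le> (\<Sum>j. real (Suc j) powr r)" for k
    by (intro sum_le_suminf) auto
qed

section \<open>Orthonormal sequences\<close>

lemma orthonormal_seq_inner: "orthonormal_seq e \<Longrightarrow> inner (e i) (e j) = (if i = j then 1 else 0)"
  unfolding orthonormal_seq_def by simp

lemma norm_orthonormal_seq: "orthonormal_seq e \<Longrightarrow> norm (e i) = 1"
  unfolding orthonormal_seq_def by (metis norm_eq_sqrt_inner real_sqrt_one)

lemma orthonormal_seq_shift: "orthonormal_seq e \<Longrightarrow> orthonormal_seq (\<lambda>i. e (i + k))"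
  unfolding orthonormal_seq_def by auto

lemma norm_sum_orthonormal_seq:
  assumes "orthonormal_seq e" "finite J"
  shows "(norm (\<Sum>j\<in>J. c j *\<^sub>R e j))\<^sup>2 = (\<Sum>j\<in>J. (c j)\<^sup>2)"
proof -
  have "pairwise (\<lambda>i j. orthogonal (c i *\<^sub>R e i) (c j *\<^sub>R e j)) J"
    using assms(1) by (auto simp: pairwise_def orthogonal_def orthonormal_seq_inner)
  then have "(norm (\<Sum>j\<in>J. c j *\<^sub>R e j))\<^sup>2 = (\<Sum>j\<in>J. (norm (c j *\<^sub>R e j))\<^sup>2)"
    by (rule norm_sum_Pythagorean[OF assms(2)])
  then show ?thesis
    using assms(1) by (simp add: norm_orthonormal_seq power_mult_distrib)
qed

lemma bessel_inequality_orthonormal_seq: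
  assumes "orthonormal_seq e" "finite J"
  shows "(\<Sum>j\<in>J. (inner x (e j))\<^sup>2) \<le> (norm x)\<^sup>2"
proof -
  define P where "P = (\<Sum>j\<in>J. inner x (e j) *\<^sub>R e j)"
  have "0 \<le> (norm (x - P))\<^sup>2" by simp
  also have "\<dots> = (norm x)\<^sup>2 - 2 * inner x P + (norm P)\<^sup>2"
    by (simp add: power2_norm_eq_inner inner_diff_left inner_diff_right inner_commute)
  also have "inner x P = (\<Sum>j\<in>J. (inner x (e j))\<^sup>2)"
    unfolding P_def by (simp add: inner_sum_right power2_eq_square)
  also have "(norm P)\<^sup>2 = (\<Sum>j\<in>J. (inner x (e j))\<^sup>2)"
    unfolding P_def using assms by (rule norm_sum_orthonormal_seq)
  finally show ?thesis by simp
qed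

lemma norm_diff_partial_sum_le:
  assumes "orthonormal_seq e" and x: "(\<lambda>j. c j *\<^sub>R e j) sums x"
    and tail: "\<And>N. (\<Sum>i<N. (c (i + k))\<^sup>2) \<le> B"
  shows "(norm (x - (\<Sum>j<k. c j *\<^sub>R e j)))\<^sup>2 \<le> B"
proof -
  have "(\<lambda>i. c (i + k) *\<^sub>R e (i + k)) sums (x - (\<Sum>j<k. c j *\<^sub>R e j))"
    using sums_iff_shift[of "\<lambda>j. c j *\<^sub>R e j" k] x by simp
  then have "(\<lambda>N. (norm (\<Sum>i<N. c (i + k) *\<^sub>R e (i + k)))\<^sup>2) \<longlonglongrightarrow> (norm (x - (\<Sum>j<k. c j *\<^sub>R e j)))\<^sup>2"
    unfolding sums_def by (intro tendsto_intros)
  moreover have "(norm (\<Sum>i<N. c (i + k) *\<^sub>R e (i + k)))\<^sup>2 \<le> B" for N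
    using norm_sum_orthonormal_seq[OF orthonormal_seq_shift[OF assms(1)]] tail by simp
  ultimately show ?thesis
    by (intro LIMSEQ_le_const2) auto
qed

section \<open>Spectral cut-off of exact data\<close>

definition sc_exact :: "('x::real_vector \<Rightarrow> 'y::real_inner) \<Rightarrow> (nat \<Rightarrow> real) \<Rightarrow> (nat \<Rightarrow> 'y)
    \<Rightarrow> (nat \<Rightarrow> 'x) \<Rightarrow> 'x \<Rightarrow> nat \<Rightarrow> 'x" where
  "sc_exact K \<sigma> u v x k = (\<Sum>j<k. (inverse (\<sigma> j) * inner (K x) (u j)) *\<^sub>R v j)"

lemma inner_svd_image:
  assumes lin: "bounded_linear K" and ou: "orthonormal_seq u"
    and svd: "\<And>j. K (v j) = \<sigma> j *\<^sub>R u j" and x: "(\<lambda>j. c j *\<^sub>R v j) sums x"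
  shows "inner (K x) (u j) = \<sigma> j * c j"
proof -
  have "(\<lambda>i. inner (K (c i *\<^sub>R v i)) (u j)) sums inner (K x) (u j)"
    using bounded_linear.sums[OF bounded_linear_inner_left bounded_linear.sums[OF lin x]] .
  moreover have "(\<lambda>i. inner (K (c i *\<^sub>R v i)) (u j)) = (\<lambda>i. if i = j then \<sigma> j * c j else 0)"
    using ou by (simp add: linear_simps(5)[OF lin] svd orthonormal_seq_inner fun_eq_iff)
  ultimately show ?thesis
    using sums_single[of j "\<lambda>_. \<sigma> j * c j"] sums_unique2 by auto
qed

lemma sc_exact_of_sums:
  assumes "bounded_linear K" "orthonormal_seq u" "\<And>j. \<sigma> j > 0"
    and "\<And>j. K (v j) = \<sigma> j *\<^sub>R u j" and "(\<lambda>j. c j *\<^sub>R v j) sums x"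
  shows "sc_exact K \<sigma> u v x k = (\<Sum>j<k. c j *\<^sub>R v j)"
proof -
  have "inverse (\<sigma> j) * (\<sigma> j * c j) = c j" for j
    using assms(3)[of j] by (simp add: field_simps)
  then show ?thesis
    by (simp only: sc_exact_def inner_svd_image[OF assms(1,2,4,5)])
qed

text \<open>The source condition forces the tail coefficients beyond \<open>k\<close> to carry the factor
  \<open>\<sigma> k powr \<nu>\<close>, so the cut-off bias is at most \<open>\<rho> * \<sigma> k powr \<nu>\<close>.\<close>

lemma sc_exact_bias_le:
  assumes lin: "bounded_linear K" and ou: "orthonormal_seq u" and ov: "orthonormal_seq v"
    and \<sigma>_pos: "\<And>j. \<sigma> j > 0" and \<sigma>_mono: "decseq \<sigma>" and svd: "\<And>j. K (v j) = \<sigma> j *\<^sub>R u j"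
    and x: "x \<in> source_set \<sigma> v \<nu> \<rho>" and \<nu>: "\<nu> \<ge> 0"
  shows "(norm (sc_exact K \<sigma> u v x k - x))\<^sup>2 \<le> \<rho>\<^sup>2 * (\<sigma> k powr \<nu>)\<^sup>2"
proof -
  obtain \<xi> where \<xi>: "norm \<xi> \<le> \<rho>" and sums: "(\<lambda>j. (\<sigma> j powr \<nu> * inner \<xi> (v j)) *\<^sub>R v j) sums x"
    using x unfolding source_set_def by blast
  have "(\<Sum>i<N. (\<sigma> (i + k) powr \<nu> * inner \<xi> (v (i + k)))\<^sup>2) \<le> \<rho>\<^sup>2 * (\<sigma> k powr \<nu>)\<^sup>2" for N
  proof -
    have "\<sigma> (i + k) powr \<nu> \<le> \<sigma> k powr \<nu>" for i
      using decseqD[OF \<sigma>_mono, of k "i + k"] less_imp_le[OF \<sigma>_pos] \<nu> by (intro powr_mono2) auto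
    then have "(\<Sum>i<N. (\<sigma> (i + k) powr \<nu> * inner \<xi> (v (i + k)))\<^sup>2)
        \<le> (\<Sum>i<N. (\<sigma> k powr \<nu>)\<^sup>2 * (inner \<xi> (v (i + k)))\<^sup>2)"
      unfolding power_mult_distrib by (intro sum_mono mult_right_mono power_mono) auto
    also have "\<dots> \<le> (\<sigma> k powr \<nu>)\<^sup>2 * (norm \<xi>)\<^sup>2"
      using bessel_inequality_orthonormal_seq[OF orthonormal_seq_shift[OF ov], of "{..<N}" \<xi>]
      by (simp add: sum_distrib_left[symmetric] mult_left_mono)
    also have "\<dots> \<le> \<rho>\<^sup>2 * (\<sigma> k powr \<nu>)\<^sup>2"
      using \<xi> by (simp add: mult.commute mult_right_mono power_mono)
    finally show ?thesis .
  qed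
  then show ?thesis
    using norm_diff_partial_sum_le[OF ov sums]
    by (simp add: sc_exact_of_sums[OF lin ou \<sigma>_pos svd sums] norm_minus_commute)
qed

lemma source_set_extremal:
  assumes lin: "bounded_linear K" and ou: "orthonormal_seq u" and ov: "orthonormal_seq v"
    and \<sigma>_pos: "\<And>j. \<sigma> j > 0" and svd: "\<And>j. K (v j) = \<sigma> j *\<^sub>R u j" and \<rho>: "\<rho> > 0"
  shows "(\<rho> * \<sigma> k powr \<nu>) *\<^sub>R v k \<in> source_set \<sigma> v \<nu> \<rho>"
    and "(norm (sc_exact K \<sigma> u v ((\<rho> * \<sigma> k powr \<nu>) *\<^sub>R v k) k - (\<rho> * \<sigma> k powr \<nu>) *\<^sub>R v k))\<^sup>2
           = \<rho>\<^sup>2 * (\<sigma> k powr \<nu>)\<^sup>2"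
proof -
  define c where "c j = (if j = k then \<rho> * \<sigma> k powr \<nu> else 0)" for j
  have c_sums: "(\<lambda>j. c j *\<^sub>R v j) sums ((\<rho> * \<sigma> k powr \<nu>) *\<^sub>R v k)"
  proof -
    have "(\<lambda>j. c j *\<^sub>R v j) = (\<lambda>j. if j = k then (\<rho> * \<sigma> k powr \<nu>) *\<^sub>R v k else 0)"
      by (auto simp: c_def)
    then show ?thesis using sums_single[of k "\<lambda>_. (\<rho> * \<sigma> k powr \<nu>) *\<^sub>R v k"] by simp
  qed
  have coeffs: "(\<lambda>j. (\<sigma> j powr \<nu> * inner (\<rho> *\<^sub>R v k) (v j)) *\<^sub>R v j) = (\<lambda>j. c j *\<^sub>R v j)"
    using ov by (auto simp: c_def orthonormal_seq_inner fun_eq_iff)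
  have "norm (\<rho> *\<^sub>R v k) \<le> \<rho>"
    using norm_orthonormal_seq[OF ov] \<rho> by simp
  then show "(\<rho> * \<sigma> k powr \<nu>) *\<^sub>R v k \<in> source_set \<sigma> v \<nu> \<rho>"
    unfolding source_set_def mem_Collect_eq using c_sums
    by (intro exI[of _ "\<rho> *\<^sub>R v k"] conjI) (simp_all only: coeffs)
  have "sc_exact K \<sigma> u v ((\<rho> * \<sigma> k powr \<nu>) *\<^sub>R v k) k = 0"
    by (simp add: sc_exact_of_sums[OF lin ou \<sigma>_pos svd c_sums] c_def)
  then show "(norm (sc_exact K \<sigma> u v ((\<rho> * \<sigma> k powr \<nu>) *\<^sub>R v k) k - (\<rho> * \<sigma> k powr \<nu>) *\<^sub>R v k))\<^sup>2
      = \<rho>\<^sup>2 * (\<sigma> k powr \<nu>)\<^sup>2"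
    using norm_orthonormal_seq[OF ov, of k] \<rho> by (simp add: power_mult_distrib)
qed

section \<open>Risk decomposition under i.i.d. centred noise\<close>

locale iid_noise = prob_space M for M :: "'w measure" +
  fixes E :: "nat \<Rightarrow> 'w \<Rightarrow> 'y::{real_inner,banach,second_countable_topology}"
  assumes E_measurable[measurable]: "\<And>i. E i \<in> borel_measurable M"
    and E_indep: "indep_vars (\<lambda>_. borel) E UNIV"
    and E_ident: "\<And>i. distr M borel (E i) = distr M borel (E 0)"
    and E_integrable: "integrable M (E 0)"
    and E_mean: "(\<integral>\<omega>. E 0 \<omega> \<partial>M) = 0"
    and E_second_moment: "integrable M (\<lambda>\<omega>. (norm (E 0 \<omega>))\<^sup>2)"
begin

definition noise_var :: "'y \<Rightarrow> real" where
  "noise_var w = (\<integral>\<omega>. (inner (E 0 \<omega>) w)\<^sup>2 \<partial>M)"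

definition mean_inner :: "nat \<Rightarrow> 'y \<Rightarrow> 'w \<Rightarrow> real" where
  "mean_inner n w \<omega> = (\<Sum>i<n. inner (E i \<omega>) w) / real n"

lemma integral_comp_E:
  fixes g :: "'y \<Rightarrow> real"
  assumes [measurable]: "g \<in> borel_measurable borel"
  shows "(\<integral>\<omega>. g (E i \<omega>) \<partial>M) = (\<integral>\<omega>. g (E 0 \<omega>) \<partial>M)"
  by (metis (no_types) E_ident E_measurable assms integral_distr)

lemma integrable_comp_E:
  fixes g :: "'y \<Rightarrow> real"
  assumes [measurable]: "g \<in> borel_measurable borel"
  shows "integrable M (\<lambda>\<omega>. g (E i \<omega>)) \<longleftrightarrow> integrable M (\<lambda>\<omega>. g (E 0 \<omega>))"
  by (metis (no_types) E_ident E_measurable assms integrable_distr_eq)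

lemma integrable_inner_E: "integrable M (\<lambda>\<omega>. inner (E i \<omega>) w)"
  using integrable_comp_E[of "\<lambda>y. inner y w" i] E_integrable by simp

lemma integral_inner_E: "(\<integral>\<omega>. inner (E i \<omega>) w \<partial>M) = 0"
  using integral_comp_E[of "\<lambda>y. inner y w" i] E_integrable E_mean by simp

lemma integrable_inner_E_sq: "integrable M (\<lambda>\<omega>. (inner (E i \<omega>) w)\<^sup>2)"
proof -
  have "integrable M (\<lambda>\<omega>. (norm w)\<^sup>2 * (norm (E 0 \<omega>))\<^sup>2)"
    using E_second_moment by simp
  then have "integrable M (\<lambda>\<omega>. (inner (E 0 \<omega>) w)\<^sup>2)"
  proof (rule Bochner_Integration.integrable_bound)
    show "AE \<omega> in M. norm ((inner (E 0 \<omega>) w)\<^sup>2) \<le> norm ((norm w)\<^sup>2 * (norm (E 0 \<omega>))\<^sup>2)"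
    proof (intro AE_I2)
      fix \<omega>
      have "\<bar>inner (E 0 \<omega>) w\<bar> \<le> norm w * norm (E 0 \<omega>)"
        using Cauchy_Schwarz_ineq2[of "E 0 \<omega>" w] by (simp add: mult.commute)
      then have "(inner (E 0 \<omega>) w)\<^sup>2 \<le> (norm w * norm (E 0 \<omega>))\<^sup>2"
        by (metis abs_ge_zero power2_abs power_mono)
      then show "norm ((inner (E 0 \<omega>) w)\<^sup>2) \<le> norm ((norm w)\<^sup>2 * (norm (E 0 \<omega>))\<^sup>2)"
        by (simp add: power_mult_distrib)
    qed
  qed measurable
  then show ?thesis
    using integrable_comp_E[of "\<lambda>y. (inner y w)\<^sup>2" i] by simp
qed

lemma integral_inner_E_sq: "(\<integral>\<omega>. (inner (E i \<omega>) w)\<^sup>2 \<partial>M) = noise_var w"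
  unfolding noise_var_def using integral_comp_E[of "\<lambda>y. (inner y w)\<^sup>2" i] by simp

lemma indep_inner_E:
  assumes "i \<noteq> i'"
  shows "indep_var borel (\<lambda>\<omega>. inner (E i \<omega>) w) borel (\<lambda>\<omega>. inner (E i' \<omega>) w)"
proof -
  have "indep_vars (\<lambda>_. borel) (\<lambda>i \<omega>. inner (E i \<omega>) w) UNIV"
    by (rule indep_vars_compose2[OF E_indep]) measurable
  then have "indep_vars (\<lambda>_. borel) (\<lambda>i \<omega>. inner (E i \<omega>) w) {i, i'}"
    by (rule indep_vars_subset) auto
  from indep_vars_sum[OF _ _ this] assms show ?thesis
    by simp
qed

lemma integrable_inner_E_mult: "integrable M (\<lambda>\<omega>. inner (E i \<omega>) w * inner (E i' \<omega>) w)"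
proof (cases "i = i'")
  case True
  then show ?thesis using integrable_inner_E_sq[of i w] by (simp add: power2_eq_square)
qed (use indep_var_integrable[OF indep_inner_E integrable_inner_E integrable_inner_E] in auto)

lemma integral_inner_E_mult:
  "(\<integral>\<omega>. inner (E i \<omega>) w * inner (E i' \<omega>) w \<partial>M) = (if i = i' then noise_var w else 0)"
proof (cases "i = i'")
  case True
  then show ?thesis using integral_inner_E_sq[of i w] by (simp add: power2_eq_square)
next
  case False
  then show ?thesis
    using indep_var_lebesgue_integral[OF indep_inner_E[OF False] integrable_inner_E integrable_inner_E]
    by (simp add: integral_inner_E)
qed

lemma integrable_mean_inner: "integrable M (mean_inner n w)"
  unfolding mean_inner_def[abs_def] using integrable_inner_E by auto

lemma integral_mean_inner: "(\<integral>\<omega>. mean_inner n w \<omega> \<partial>M) = 0"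
  unfolding mean_inner_def using integrable_inner_E by (simp add: integral_inner_E)

lemma mean_inner_sq:
  "(mean_inner n w \<omega>)\<^sup>2 = (\<Sum>i<n. \<Sum>i'<n. inner (E i \<omega>) w * inner (E i' \<omega>) w) / (real n)\<^sup>2"
  unfolding mean_inner_def by (simp add: power_divide power2_eq_square sum_product)

lemma integrable_mean_inner_sq: "integrable M (\<lambda>\<omega>. (mean_inner n w \<omega>)\<^sup>2)"
  unfolding mean_inner_sq using integrable_inner_E_mult by auto

text \<open>Independence kills the cross terms: the variance of the mean decays like \<open>1 / n\<close>.\<close>

lemma integral_mean_inner_sq:
  assumes "n \<ge> 1"
  shows "(\<integral>\<omega>. (mean_inner n w \<omega>)\<^sup>2 \<partial>M) = noise_var w / real n"
proof -
  have "(\<integral>\<omega>. (mean_inner n w \<omega>)\<^sup>2 \<partial>M) = (\<Sum>i<n. \<Sum>i'<n. if i = i' then noise_var w else 0) / (real n)\<^sup>2"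
    unfolding mean_inner_sq using integrable_inner_E_mult by (simp add: integral_inner_E_mult)
  also have "\<dots> = noise_var w / real n"
    using assms by (simp add: power2_eq_square)
  finally show ?thesis .
qed

lemma inner_Ybar:
  assumes "n \<ge> 1"
  shows "inner (Ybar K E x n \<omega>) w = inner (K x) w + mean_inner n w \<omega>"
proof -
  have "Ybar K E x n \<omega> = K x + (1 / real n) *\<^sub>R (\<Sum>i<n. E i \<omega>)"
    using assms by (simp add: Ybar_def sum.distrib scaleR_add_right sum_constant_scaleR)
  then show ?thesis
    by (simp add: mean_inner_def inner_add_left inner_sum_left)
qed

lemma sc_risk_eq:
  assumes ov: "orthonormal_seq v" and n: "n \<ge> 1"
  shows "sc_risk M K \<sigma> u v E x n k =
    (norm (sc_exact K \<sigma> u v x k - x))\<^sup>2 + (\<Sum>j<k. noise_var (u j) / (\<sigma> j)\<^sup>2) / real n"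
proof -
  define d where "d = sc_exact K \<sigma> u v x k - x"
  define Z where "Z \<omega> = (\<Sum>j<k. (inverse (\<sigma> j) * mean_inner n (u j) \<omega>) *\<^sub>R v j)" for \<omega>
  have "sc_est K \<sigma> u v E x n k \<omega> - x = d + Z \<omega>" for \<omega>
    by (simp add: d_def Z_def sc_est_def sc_exact_def inner_Ybar[OF n] distrib_left
        scaleR_add_left sum.distrib)
  then have pointwise: "(norm (sc_est K \<sigma> u v E x n k \<omega> - x))\<^sup>2 = (norm d)\<^sup>2
      + (\<Sum>j<k. (2 * inverse (\<sigma> j) * inner d (v j)) * mean_inner n (u j) \<omega>)
      + (\<Sum>j<k. (inverse (\<sigma> j))\<^sup>2 * (mean_inner n (u j) \<omega>)\<^sup>2)" for \<omega>
    using norm_sum_orthonormal_seq[OF ov, of "{..<k}" "\<lambda>j. inverse (\<sigma> j) * mean_inner n (u j) \<omega>"]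
    by (simp add: power2_norm_eq_inner inner_add_left inner_add_right inner_commute Z_def
        inner_sum_right sum_distrib_left power_mult_distrib mult_ac)
  have "sc_risk M K \<sigma> u v E x n k = (norm d)\<^sup>2
      + (\<Sum>j<k. (2 * inverse (\<sigma> j) * inner d (v j)) * (\<integral>\<omega>. mean_inner n (u j) \<omega> \<partial>M))
      + (\<Sum>j<k. (inverse (\<sigma> j))\<^sup>2 * (\<integral>\<omega>. (mean_inner n (u j) \<omega>)\<^sup>2 \<partial>M))"
    unfolding sc_risk_def pointwise
    using integrable_mean_inner integrable_mean_inner_sq by (simp add: prob_space)
  also have "\<dots> = (norm d)\<^sup>2 + (\<Sum>j<k. noise_var (u j) / (\<sigma> j)\<^sup>2) / real n"
    by (simp add: integral_mean_inner integral_mean_inner_sq[OF n] sum_divide_distrib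
        sum_distrib_left power_inverse divide_inverse mult_ac)
  finally show ?thesis unfolding d_def .
qed

end

lemma (in iid_noise) worst_case_sc_risk:
  assumes lin: "bounded_linear K" and ou: "orthonormal_seq u" and ov: "orthonormal_seq v"
    and \<sigma>_pos: "\<And>j. \<sigma> j > 0" and \<sigma>_mono: "decseq \<sigma>" and svd: "\<And>j. K (v j) = \<sigma> j *\<^sub>R u j"
    and \<nu>: "\<nu> \<ge> 0" and \<rho>: "\<rho> > 0" and n: "n \<ge> 1"
  shows "(SUP x\<in>source_set \<sigma> v \<nu> \<rho>. sc_risk M K \<sigma> u v E x n k)
    = \<rho>\<^sup>2 * (\<sigma> k powr \<nu>)\<^sup>2 + (\<Sum>j<k. noise_var (u j) / (\<sigma> j)\<^sup>2) / real n"
proof (rule cSup_eq_maximum)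
  let ?x = "(\<rho> * \<sigma> k powr \<nu>) *\<^sub>R v k"
  show "\<rho>\<^sup>2 * (\<sigma> k powr \<nu>)\<^sup>2 + (\<Sum>j<k. noise_var (u j) / (\<sigma> j)\<^sup>2) / real n
      \<in> (\<lambda>x. sc_risk M K \<sigma> u v E x n k) ` source_set \<sigma> v \<nu> \<rho>"
    using source_set_extremal[OF lin ou ov \<sigma>_pos svd \<rho>] sc_risk_eq[OF ov n, of K \<sigma> u ?x k]
    by (intro image_eqI[of _ _ ?x]) auto
next
  fix y
  assume "y \<in> (\<lambda>x. sc_risk M K \<sigma> u v E x n k) ` source_set \<sigma> v \<nu> \<rho>"
  then show "y \<le> \<rho>\<^sup>2 * (\<sigma> k powr \<nu>)\<^sup>2 + (\<Sum>j<k. noise_var (u j) / (\<sigma> j)\<^sup>2) / real n"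
    using sc_exact_bias_le[OF lin ou ov \<sigma>_pos \<sigma>_mono svd _ \<nu>] sc_risk_eq[OF ov n] by auto
qed

lemma bias_rate:
  assumes "asymp_all (\<lambda>j. (\<sigma> j)\<^sup>2) (\<lambda>j. real (Suc j) powr (- q))" "\<nu> \<ge> 0" "\<rho> \<noteq> 0"
  shows "asymp_all (\<lambda>k. \<rho>\<^sup>2 * (\<sigma> k powr \<nu>)\<^sup>2) (\<lambda>k. real (Suc k) powr (- (q * \<nu>)))"
proof -
  have "asymp_all (\<lambda>k. \<rho>\<^sup>2 * ((\<sigma> k)\<^sup>2) powr \<nu>) (\<lambda>k. (real (Suc k) powr (- q)) powr \<nu>)"
    using assms by (intro asymp_all_mult_left asymp_all_powr) auto
  moreover have "((\<sigma> k)\<^sup>2) powr \<nu> = (\<sigma> k powr \<nu>)\<^sup>2" for k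
    by (simp add: power2_eq_square powr_mult)
  ultimately show ?thesis
    by (simp add: powr_powr)
qed

lemma variance_rate:
  assumes "asymp_all (\<lambda>j. (\<sigma> j)\<^sup>2) (\<lambda>j. real (Suc j) powr (- q))"
    and "asymp_all a (\<lambda>j. real (Suc j) powr (- p))"
  shows "asymp_all (\<lambda>k. \<Sum>j<k. a j / (\<sigma> j)\<^sup>2) (\<lambda>k. \<Sum>j<k. real (Suc j) powr (q - p))"
proof -
  have "asymp_all (\<lambda>j. a j / (\<sigma> j)\<^sup>2) (\<lambda>j. real (Suc j) powr (- p) / real (Suc j) powr (- q))"
    using assms by (intro asymp_all_divide) auto
  then show ?thesis
    by (intro asymp_all_sum) (simp add: powr_diff[symmetric])
qed

section \<open>The three rate regimes\<close>

definition minimax_rate :: "real \<Rightarrow> real \<Rightarrow> real \<Rightarrow> real \<Rightarrow> nat \<Rightarrow> real" where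
  "minimax_rate q p \<nu> \<rho> n =
    (if q - p < -1 then 1 / real n
     else if q - p = -1 then ln (real n * \<rho>) / real n
     else \<rho> powr ((q + 1 - p) / ((\<nu> + 1) * q + 1 - p)) * (1 / real n) powr (\<nu> / (\<nu> + 1 - (p - 1) / q)))"

definition optimal_cutoff :: "real \<Rightarrow> real \<Rightarrow> real \<Rightarrow> real \<Rightarrow> nat \<Rightarrow> real" where
  "optimal_cutoff q p \<nu> \<rho> n =
    (if q - p \<le> -1 then (\<rho> * real n) powr (1 / (\<nu> * q))
     else (\<rho> * real n) powr (1 / ((1 + \<nu>) * q + 1 - p)))"

text \<open>\<open>b k\<close> is the squared worst-case bias and \<open>V k / n\<close> the variance of the cut-off at level \<open>k\<close>.\<close>

locale cutoff_rates =
  fixes b V :: "nat \<Rightarrow> real" and q p \<nu> \<rho> cb Cb cV CV :: real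
  assumes q_pos: "q > 0" and \<nu>_pos: "\<nu> > 0" and \<rho>_pos: "\<rho> > 0"
    and cb_pos: "cb > 0" and Cb_pos: "Cb > 0" and cV_pos: "cV > 0" and CV_pos: "CV > 0"
    and b_lower: "\<And>k. cb * real (Suc k) powr (- (q * \<nu>)) \<le> b k"
    and b_upper: "\<And>k. b k \<le> Cb * real (Suc k) powr (- (q * \<nu>))"
    and V_lower: "\<And>k. cV * (\<Sum>j<k. real (Suc j) powr (q - p)) \<le> V k"
    and V_upper: "\<And>k. V k \<le> CV * (\<Sum>j<k. real (Suc j) powr (q - p))"
begin

lemma b_nonneg: "b k \<ge> 0"
  using b_lower[of k] cb_pos by (meson order_trans mult_nonneg_nonneg less_imp_le powr_ge_zero)

lemma V_nonneg: "V k \<ge> 0"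
proof -
  have "0 \<le> cV * (\<Sum>j<k. real (Suc j) powr (q - p))"
    using cV_pos by (intro mult_nonneg_nonneg sum_nonneg) auto
  then show ?thesis using V_lower[of k] by linarith
qed

lemma q\<nu>_pos: "q * \<nu> > 0"
  using q_pos \<nu>_pos by simp

lemma b_le_at_level:
  assumes "c > 0" "h > 0" "c * h \<le> real k"
  shows "b k \<le> Cb * c powr (- (q * \<nu>)) * h powr (- (q * \<nu>))"
proof -
  have "real (Suc k) powr (- (q * \<nu>)) \<le> (c * h) powr (- (q * \<nu>))"
    using assms q\<nu>_pos by (intro powr_mono2') auto
  also have "\<dots> = c powr (- (q * \<nu>)) * h powr (- (q * \<nu>))"
    using assms by (simp add: powr_mult)
  finally have "Cb * real (Suc k) powr (- (q * \<nu>)) \<le> Cb * (c powr (- (q * \<nu>)) * h powr (- (q * \<nu>)))"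
    using Cb_pos by (intro mult_left_mono) auto
  then show ?thesis
    using b_upper[of k] by (simp add: mult.assoc)
qed

lemma b_le_beyond_cutoff:
  assumes "cK > 0" "n \<ge> 1" "cK * (\<rho> * real n) powr (1 / (\<nu> * q)) \<le> real k"
  shows "b k \<le> Cb * cK powr (- (q * \<nu>)) / \<rho> / real n"
proof -
  have "b k \<le> Cb * cK powr (- (q * \<nu>)) * ((\<rho> * real n) powr (1 / (\<nu> * q))) powr (- (q * \<nu>))"
    using assms \<rho>_pos by (intro b_le_at_level) auto
  also have "((\<rho> * real n) powr (1 / (\<nu> * q))) powr (- (q * \<nu>)) = 1 / \<rho> / real n"
    using assms \<rho>_pos q_pos \<nu>_pos by (simp add: powr_powr powr_minus_divide)
  finally show ?thesis by simp
qed

lemma lower_bound_summable: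
  assumes "q - p < -1" "n \<ge> 1" "k \<ge> 1"
  shows "cV * (1 / real n) \<le> b k + V k / real n"
proof -
  have "1 \<le> (\<Sum>j<k. real (Suc j) powr (q - p))"
    using assms(3) member_le_sum[of 0 "{..<k}" "\<lambda>j. real (Suc j) powr (q - p)"] by simp
  then have "cV * 1 \<le> cV * (\<Sum>j<k. real (Suc j) powr (q - p))"
    using cV_pos by (intro mult_left_mono) auto
  then have "cV \<le> V k"
    using V_lower[of k] by simp
  then have "cV / real n \<le> V k / real n"
    using assms(2) by (simp add: divide_right_mono)
  then show ?thesis
    using b_nonneg[of k] by simp
qed

lemma upper_bound_summable:
  assumes "q - p < -1" "cK > 0"
  obtains C where "\<And>n k. n \<ge> 1 \<Longrightarrow> cK * (\<rho> * real n) powr (1 / (\<nu> * q)) \<le> real k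
    \<Longrightarrow> b k + V k / real n \<le> C * (1 / real n)"
proof -
  obtain S where S: "\<And>k. (\<Sum>j<k. real (Suc j) powr (q - p)) \<le> S"
    using sum_Suc_powr_bounded[OF assms(1)] by blast
  have "b k + V k / real n \<le> (Cb * cK powr (- (q * \<nu>)) / \<rho> + CV * S) * (1 / real n)"
    if "n \<ge> 1" "cK * (\<rho> * real n) powr (1 / (\<nu> * q)) \<le> real k" for n k
  proof -
    have "V k \<le> CV * S"
      using V_upper[of k] mult_left_mono[OF S[of k], of CV] CV_pos by linarith
    then have "V k / real n \<le> CV * S / real n"
      using that(1) by (simp add: divide_right_mono)
    with b_le_beyond_cutoff[OF assms(2) that] show ?thesis
      by (simp add: add_divide_distrib)
  qed
  then show ?thesis using that by blast
qed

text \<open>Here \<open>V k\<close> grows like \<open>ln k\<close>. For a lower bound either \<open>k\<close> exceeds a power of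
  \<open>n\<close>, so that \<open>V k \<ge> cV * ln k\<close> is of order \<open>ln n\<close>, or \<open>b k\<close> alone is of order \<open>n powr (-1/2)\<close>.\<close>

lemma lower_bound_critical:
  assumes r: "q - p = -1"
  obtains c where "c > 0"
    "eventually (\<lambda>n. \<forall>k\<ge>1. c * (ln (real n * \<rho>) / real n) \<le> b k + V k / real n) sequentially"
proof -
  define a where "a = q * \<nu>"
  have a: "a > 0" using q\<nu>_pos by (simp add: a_def)
  define c where "c = min (cb / 4) (cV / (4 * a))"
  have c: "c > 0" using cb_pos cV_pos a by (simp add: c_def)
  have ev_ln: "eventually (\<lambda>n. ln (real n * \<rho>) \<le> 2 * ln (real n)) sequentially"
    using \<rho>_pos by real_asymp
  have ev_sqrt: "eventually (\<lambda>n. 2 * c * ln (real n) / real n \<le> cb * real n powr (-1/2)) sequentially"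
    using c cb_pos by real_asymp
  have "eventually (\<lambda>n. \<forall>k\<ge>1. c * (ln (real n * \<rho>) / real n) \<le> b k + V k / real n) sequentially"
    using ev_ln ev_sqrt eventually_ge_at_top[of 1]
  proof eventually_elim
    case (elim n)
    have n: "real n > 0" "ln (real n) \<ge> 0" using elim(3) by auto
    have c_ln: "c * (ln (real n * \<rho>) / real n) \<le> 2 * c * ln (real n) / real n"
      using elim(1) c n by (simp add: divide_right_mono mult_left_mono)
    show ?case
    proof (intro allI impI)
      fix k :: nat
      assume "k \<ge> 1"
      show "c * (ln (real n * \<rho>) / real n) \<le> b k + V k / real n"
      proof (cases "real (Suc k) powr a \<ge> real n powr (1/2)")
        case True
        then have "ln (real n powr (1/2)) \<le> ln (real (Suc k) powr a)"
          using n by (subst ln_le_cancel_iff) auto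
        then have "ln (real n) / 2 \<le> a * ln (real (Suc k))"
          using n by (simp add: ln_powr)
        then have "ln (real n) / (2 * a) \<le> ln (real k + 1)"
          using a by (simp add: field_simps add.commute)
        moreover have "cV * ln (real k + 1) \<le> V k"
          using V_lower[of k] mult_left_mono[OF harm_ge_ln[of k], of cV] cV_pos
          by (simp only: r sum_Suc_powr_minus_one) linarith
        ultimately have "cV * (ln (real n) / (2 * a)) \<le> V k"
          using mult_left_mono[of "ln (real n) / (2 * a)" "ln (real k + 1)" cV] cV_pos by linarith
        moreover have "2 * c * ln (real n) \<le> cV * (ln (real n) / (2 * a))"
        proof -
          have "2 * c \<le> cV / (2 * a)" by (simp add: c_def)
          then have "2 * c * ln (real n) \<le> cV / (2 * a) * ln (real n)"
            using n(2) by (rule mult_right_mono)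
          then show ?thesis by simp
        qed
        ultimately have "2 * c * ln (real n) / real n \<le> V k / real n"
          using n by (simp add: divide_right_mono)
        then show ?thesis using c_ln b_nonneg[of k] by linarith
      next
        case False
        then have "real n powr (-1/2) \<le> real (Suc k) powr (- a)"
          using n by (simp add: powr_minus_divide divide_left_mono)
        then have "cb * real n powr (-1/2) \<le> cb * real (Suc k) powr (- (q * \<nu>))"
          using cb_pos unfolding a_def by (intro mult_left_mono) auto
        then have "cb * real n powr (-1/2) \<le> b k"
          using b_lower[of k] by linarith
        moreover have "V k / real n \<ge> 0"
          using V_nonneg[of k] n by simp
        ultimately show ?thesis
          using c_ln elim(2) by linarith
      qed
    qed
  qed
  then show ?thesis using that c by blast
qed

lemma upper_bound_critical:
  assumes r: "q - p = -1" and cK: "cK > 0" and CK: "CK > 0"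
  obtains C where "eventually (\<lambda>n. \<forall>k. cK * (\<rho> * real n) powr (1 / (\<nu> * q)) \<le> real k
      \<and> real k \<le> CK * (\<rho> * real n) powr (1 / (\<nu> * q))
      \<longrightarrow> b k + V k / real n \<le> C * (ln (real n * \<rho>) / real n)) sequentially"
proof -
  define B where "B = Cb * cK powr (- (q * \<nu>)) / \<rho> + CV * (1 + \<bar>ln CK\<bar>)"
  define C where "C = B + CV / (\<nu> * q)"
  have B: "B \<ge> 0" using Cb_pos CV_pos \<rho>_pos by (simp add: B_def)
  have ev_level: "eventually (\<lambda>n. 1 \<le> cK * (\<rho> * real n) powr (1 / (\<nu> * q))) sequentially"
  proof -
    have "1 / (\<nu> * q) > 0" using q\<nu>_pos by (simp add: mult.commute)
    then show ?thesis using cK \<rho>_pos by real_asymp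
  qed
  have ev_ln: "eventually (\<lambda>n. 1 \<le> ln (real n * \<rho>)) sequentially"
    using \<rho>_pos by real_asymp
  have "eventually (\<lambda>n. \<forall>k. cK * (\<rho> * real n) powr (1 / (\<nu> * q)) \<le> real k
      \<and> real k \<le> CK * (\<rho> * real n) powr (1 / (\<nu> * q))
      \<longrightarrow> b k + V k / real n \<le> C * (ln (real n * \<rho>) / real n)) sequentially"
    using ev_level ev_ln eventually_ge_at_top[of 1]
  proof eventually_elim
    case (elim n)
    define L where "L = ln (real n * \<rho>)"
    have n: "real n > 0" using elim(3) by simp
    show ?case
    proof (intro allI impI)
      fix k
      assume k: "cK * (\<rho> * real n) powr (1 / (\<nu> * q)) \<le> real k
        \<and> real k \<le> CK * (\<rho> * real n) powr (1 / (\<nu> * q))"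
      then have "k \<ge> 1" using elim(1) by simp
      have "b k \<le> Cb * cK powr (- (q * \<nu>)) / \<rho> / real n"
        using b_le_beyond_cutoff[OF cK elim(3)] k by blast
      then have "b k * real n \<le> Cb * cK powr (- (q * \<nu>)) / \<rho>"
        using n by (metis pos_le_divide_eq)
      moreover have "V k \<le> CV * (1 + \<bar>ln CK\<bar>) + CV / (\<nu> * q) * L"
      proof -
        have "ln (real k) \<le> ln (CK * (\<rho> * real n) powr (1 / (\<nu> * q)))"
          using k \<open>k \<ge> 1\<close> by simp
        also have "\<dots> = ln CK + L / (\<nu> * q)"
          using CK \<rho>_pos n by (simp add: L_def ln_mult ln_powr mult.commute)
        finally have "1 + ln (real k) \<le> 1 + \<bar>ln CK\<bar> + L / (\<nu> * q)" by simp
        moreover have "V k \<le> CV * (1 + ln (real k))"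
          using V_upper[of k] mult_left_mono[OF harm_le_one_plus_ln[OF \<open>k \<ge> 1\<close>], of CV] CV_pos
          by (simp only: r sum_Suc_powr_minus_one) linarith
        ultimately have "V k \<le> CV * (1 + \<bar>ln CK\<bar> + L / (\<nu> * q))"
          using mult_left_mono[of "1 + ln (real k)" "1 + \<bar>ln CK\<bar> + L / (\<nu> * q)" CV] CV_pos
          by linarith
        then show ?thesis
          by (simp add: distrib_left)
      qed
      ultimately have "b k * real n + V k \<le> B + CV / (\<nu> * q) * L"
        by (simp add: B_def)
      also have "\<dots> \<le> C * L"
        using B elim(2) by (simp add: C_def L_def distrib_right mult_le_cancel_left1)
      finally have "(b k * real n + V k) / real n \<le> C * L / real n"
        using n by (simp add: divide_right_mono)
      then show "b k + V k / real n \<le> C * (ln (real n * \<rho>) / real n)"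
        using n by (simp add: L_def add_divide_distrib)
    qed
  qed
  then show ?thesis using that by blast
qed


definition D :: real where
  "D = (1 + \<nu>) * q + 1 - p"

context
  assumes r: "q - p > -1"
begin

lemma D_eq: "D = q * \<nu> + (q - p + 1)"
  unfolding D_def by (simp add: algebra_simps)

lemma D_pos: "D > 0"
  unfolding D_eq using r q\<nu>_pos by linarith

lemma powr_variance_exponent:
  assumes "n \<ge> 1"
  shows "real n powr ((q - p + 1) / D) / real n = real n powr (- (q * \<nu>) / D)"
proof -
  have "(q - p + 1) / D = - (q * \<nu>) / D + 1"
    using D_pos by (simp add: D_eq field_simps)
  then show ?thesis
    using assms by (simp only: powr_add) simp
qed

text \<open>The balance \<open>k ~ n powr (1 / D)\<close> equates bias \<open>k powr (- q * \<nu>)\<close> and variance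
  \<open>k powr (q - p + 1) / n\<close>; below it the bias, above it the variance dominates.\<close>

lemma lower_bound_polynomial:
  obtains c where "c > 0"
    "\<And>n k. n \<ge> 1 \<Longrightarrow> k \<ge> 1 \<Longrightarrow> c * real n powr (- (q * \<nu>) / D) \<le> b k + V k / real n"
proof -
  obtain cT where cT: "cT > 0" and sum_lower: "\<And>k. cT * real k powr (q - p + 1) \<le> (\<Sum>j<k. real (Suc j) powr (q - p))"
    using asymp_allE[OF sum_Suc_powr_asymp[OF r]] by blast
  define c where "c = min (cb * 2 powr (- (q * \<nu>))) (cV * cT)"
  have c: "c > 0" using cb_pos cV_pos cT by (simp add: c_def)
  have "c * real n powr (- (q * \<nu>) / D) \<le> b k + V k / real n" if n: "n \<ge> 1" and k: "k \<ge> 1" for n k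
  proof (cases "real k \<ge> real n powr (1 / D)")
    case True
    have "real n powr ((q - p + 1) / D) = (real n powr (1 / D)) powr (q - p + 1)"
      by (simp add: powr_powr)
    also have "\<dots> \<le> real k powr (q - p + 1)"
      using True r by (intro powr_mono2) auto
    finally have "cV * cT * real n powr ((q - p + 1) / D) \<le> cV * (cT * real k powr (q - p + 1))"
      using cV_pos cT by (simp add: mult.assoc mult_left_mono)
    also have "\<dots> \<le> V k"
      using mult_left_mono[OF sum_lower[of k], of cV] V_lower[of k] cV_pos by linarith
    finally have "cV * cT * real n powr (- (q * \<nu>) / D) \<le> V k / real n"
      using n powr_variance_exponent[OF n] by (simp add: field_simps)
    moreover have "c * real n powr (- (q * \<nu>) / D) \<le> cV * cT * real n powr (- (q * \<nu>) / D)"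
      by (intro mult_right_mono) (simp_all add: c_def)
    ultimately have "c * real n powr (- (q * \<nu>) / D) \<le> V k / real n"
      by linarith
    then show ?thesis using b_nonneg[of k] by simp
  next
    case False
    then have "(2 * real n powr (1 / D)) powr (- (q * \<nu>)) \<le> real (Suc k) powr (- (q * \<nu>))"
      using k q\<nu>_pos by (intro powr_mono2') auto
    moreover have "(2 * real n powr (1 / D)) powr (- (q * \<nu>)) = 2 powr (- (q * \<nu>)) * real n powr (- (q * \<nu>) / D)"
      using n by (simp add: powr_mult powr_powr)
    ultimately have "cb * (2 powr (- (q * \<nu>)) * real n powr (- (q * \<nu>) / D))
        \<le> cb * real (Suc k) powr (- (q * \<nu>))"
      using cb_pos by (simp add: mult_left_mono)
    then have "cb * (2 powr (- (q * \<nu>)) * real n powr (- (q * \<nu>) / D)) \<le> b k"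
      using b_lower[of k] by linarith
    moreover have "c * real n powr (- (q * \<nu>) / D) \<le> cb * 2 powr (- (q * \<nu>)) * real n powr (- (q * \<nu>) / D)"
      by (intro mult_right_mono) (simp_all add: c_def)
    ultimately have "c * real n powr (- (q * \<nu>) / D) \<le> b k"
      by (simp add: mult.assoc)
    then show ?thesis using V_nonneg[of k] n by (simp add: add_increasing2)
  qed
  then show ?thesis using that c by blast
qed

lemma upper_bound_polynomial:
  assumes cK: "cK > 0"
  obtains C where "\<And>n k. n \<ge> 1 \<Longrightarrow> cK * (\<rho> * real n) powr (1 / D) \<le> real k
    \<Longrightarrow> real k \<le> CK * (\<rho> * real n) powr (1 / D) \<Longrightarrow> b k + V k / real n \<le> C * real n powr (- (q * \<nu>) / D)"
proof -
  obtain cT CT where "0 < cT" "cT \<le> CT"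
    and "\<And>k. cT * real k powr (q - p + 1) \<le> (\<Sum>j<k. real (Suc j) powr (q - p))"
    and sum_upper: "\<And>k. (\<Sum>j<k. real (Suc j) powr (q - p)) \<le> CT * real k powr (q - p + 1)"
    using asymp_allE[OF sum_Suc_powr_asymp[OF r]] by blast
  have CT: "CT > 0" using \<open>0 < cT\<close> \<open>cT \<le> CT\<close> by simp
  define C where "C = Cb * cK powr (- (q * \<nu>)) * \<rho> powr (- (q * \<nu>) / D)
    + CV * CT * CK powr (q - p + 1) * \<rho> powr ((q - p + 1) / D)"
  have "b k + V k / real n \<le> C * real n powr (- (q * \<nu>) / D)"
    if n: "n \<ge> 1" and k: "cK * (\<rho> * real n) powr (1 / D) \<le> real k" "real k \<le> CK * (\<rho> * real n) powr (1 / D)"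
    for n k
  proof -
    define h where "h = (\<rho> * real n) powr (1 / D)"
    have h: "h > 0" using n \<rho>_pos by (simp add: h_def)
    have "0 < CK * h"
      using mult_pos_pos[OF cK h] k unfolding h_def by linarith
    then have CK: "CK \<ge> 0"
      using h by (simp add: zero_less_mult_iff)
    have "b k \<le> Cb * cK powr (- (q * \<nu>)) * h powr (- (q * \<nu>))"
      using b_le_at_level[of cK h k] cK h k by (simp add: h_def)
    also have "h powr (- (q * \<nu>)) = \<rho> powr (- (q * \<nu>) / D) * real n powr (- (q * \<nu>) / D)"
      using n \<rho>_pos unfolding h_def by (simp add: powr_powr powr_mult)
    finally have bias: "b k \<le> Cb * cK powr (- (q * \<nu>)) * \<rho> powr (- (q * \<nu>) / D) * real n powr (- (q * \<nu>) / D)"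
      by (simp add: mult.assoc)
    have "V k \<le> CV * (CT * real k powr (q - p + 1))"
      using V_upper[of k] mult_left_mono[OF sum_upper[of k], of CV] CV_pos by linarith
    also have "\<dots> \<le> CV * (CT * (CK * h) powr (q - p + 1))"
    proof -
      have "real k powr (q - p + 1) \<le> (CK * h) powr (q - p + 1)"
        using k(2) r unfolding h_def by (intro powr_mono2) auto
      then show ?thesis
        using CV_pos CT by (simp add: mult_left_mono)
    qed
    also have "\<dots> = CV * CT * CK powr (q - p + 1) * \<rho> powr ((q - p + 1) / D) * real n powr ((q - p + 1) / D)"
      using CK n \<rho>_pos h unfolding h_def by (simp add: powr_mult powr_powr)
    finally have "V k / real n \<le> CV * CT * CK powr (q - p + 1) * \<rho> powr ((q - p + 1) / D)
        * real n powr ((q - p + 1) / D) / real n"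
      using n by (intro divide_right_mono) auto
    also have "\<dots> = CV * CT * CK powr (q - p + 1) * \<rho> powr ((q - p + 1) / D) * real n powr (- (q * \<nu>) / D)"
      by (simp only: times_divide_eq_right[symmetric] powr_variance_exponent[OF n])
    finally show ?thesis
      using bias unfolding C_def by (simp add: distrib_right)
  qed
  then show ?thesis using that by blast
qed

lemma minimax_rate_polynomial:
  assumes "n \<ge> 1"
  shows "minimax_rate q p \<nu> \<rho> n = \<rho> powr ((q - p + 1) / D) * real n powr (- (q * \<nu>) / D)"
proof -
  have "\<nu> / (\<nu> + 1 - (p - 1) / q) = q * \<nu> / D"
    using q_pos D_pos unfolding D_def by (simp add: field_simps)
  moreover have "(q + 1 - p) / ((\<nu> + 1) * q + 1 - p) = (q - p + 1) / D"
    by (simp add: D_def algebra_simps)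
  ultimately show ?thesis
    using r assms by (simp add: minimax_rate_def powr_minus_divide powr_divide)
qed

lemma optimal_cutoff_polynomial: "optimal_cutoff q p \<nu> \<rho> n = (\<rho> * real n) powr (1 / D)"
  using r by (simp add: optimal_cutoff_def D_def)

end


lemma minimax_rate_lower:
  obtains c where "c > 0"
    "eventually (\<lambda>n. \<forall>k\<ge>1. c * minimax_rate q p \<nu> \<rho> n \<le> b k + V k / real n) sequentially"
proof -
  consider "q - p < -1" | "q - p = -1" | "q - p > -1" by linarith
  then show ?thesis
  proof cases
    case 1
    have "eventually (\<lambda>n. \<forall>k\<ge>1. cV * minimax_rate q p \<nu> \<rho> n \<le> b k + V k / real n) sequentially"
      using eventually_ge_at_top[of 1]
      by eventually_elim (use lower_bound_summable[OF 1] 1 in \<open>simp add: minimax_rate_def\<close>)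
    then show ?thesis using that cV_pos by blast
  next
    case 2
    have rate: "minimax_rate q p \<nu> \<rho> = (\<lambda>n. ln (real n * \<rho>) / real n)"
      using 2 by (simp add: minimax_rate_def fun_eq_iff)
    obtain c where "c > 0"
      "eventually (\<lambda>n. \<forall>k\<ge>1. c * (ln (real n * \<rho>) / real n) \<le> b k + V k / real n) sequentially"
      using lower_bound_critical[OF 2] by blast
    then show ?thesis using that unfolding rate by blast
  next
    case 3
    obtain c where c: "c > 0"
      and bound: "\<And>n k. n \<ge> 1 \<Longrightarrow> k \<ge> 1 \<Longrightarrow> c * real n powr (- (q * \<nu>) / D) \<le> b k + V k / real n"
      using lower_bound_polynomial[OF 3] by blast
    let ?c = "c / \<rho> powr ((q - p + 1) / D)"
    have "eventually (\<lambda>n. \<forall>k\<ge>1. ?c * minimax_rate q p \<nu> \<rho> n \<le> b k + V k / real n) sequentially"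
      using eventually_ge_at_top[of 1]
      by eventually_elim (use bound \<rho>_pos in \<open>simp add: minimax_rate_polynomial[OF 3]\<close>)
    moreover have "?c > 0" using c \<rho>_pos by simp
    ultimately show ?thesis using that by blast
  qed
qed

lemma minimax_rate_upper:
  assumes "asymp_ev (\<lambda>n. real (kn n)) (optimal_cutoff q p \<nu> \<rho>)"
  obtains C where "eventually (\<lambda>n. b (kn n) + V (kn n) / real n \<le> C * minimax_rate q p \<nu> \<rho> n) sequentially"
proof -
  obtain cK CK where cK: "0 < cK" "cK \<le> CK" and kn: "eventually (\<lambda>n.
      cK * optimal_cutoff q p \<nu> \<rho> n \<le> real (kn n) \<and> real (kn n) \<le> CK * optimal_cutoff q p \<nu> \<rho> n) sequentially"
    using assms unfolding asymp_ev_def by blast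
  consider "q - p < -1" | "q - p = -1" | "q - p > -1" by linarith
  then show ?thesis
  proof cases
    case 1
    obtain C where bound: "\<And>n k. n \<ge> 1 \<Longrightarrow> cK * (\<rho> * real n) powr (1 / (\<nu> * q)) \<le> real k
        \<Longrightarrow> b k + V k / real n \<le> C * (1 / real n)"
      using upper_bound_summable[OF 1 cK(1)] by blast
    have "eventually (\<lambda>n. b (kn n) + V (kn n) / real n \<le> C * minimax_rate q p \<nu> \<rho> n) sequentially"
      using kn eventually_ge_at_top[of 1]
      by eventually_elim (use bound 1 in \<open>simp add: minimax_rate_def optimal_cutoff_def\<close>)
    then show ?thesis using that by blast
  next
    case 2
    obtain C where "eventually (\<lambda>n. \<forall>k. cK * (\<rho> * real n) powr (1 / (\<nu> * q)) \<le> real k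
        \<and> real k \<le> CK * (\<rho> * real n) powr (1 / (\<nu> * q))
        \<longrightarrow> b k + V k / real n \<le> C * (ln (real n * \<rho>) / real n)) sequentially"
      using upper_bound_critical[OF 2 cK(1)] cK by (meson less_le_trans)
    then have "eventually (\<lambda>n. b (kn n) + V (kn n) / real n \<le> C * minimax_rate q p \<nu> \<rho> n) sequentially"
      using kn by eventually_elim (use 2 in \<open>simp add: minimax_rate_def optimal_cutoff_def\<close>)
    then show ?thesis using that by blast
  next
    case 3
    obtain C where bound: "\<And>n k. n \<ge> 1 \<Longrightarrow> cK * (\<rho> * real n) powr (1 / D) \<le> real k
        \<Longrightarrow> real k \<le> CK * (\<rho> * real n) powr (1 / D) \<Longrightarrow> b k + V k / real n \<le> C * real n powr (- (q * \<nu>) / D)"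
      using upper_bound_polynomial[OF 3 cK(1)] by blast
    have "eventually (\<lambda>n. b (kn n) + V (kn n) / real n \<le> C / \<rho> powr ((q - p + 1) / D) * minimax_rate q p \<nu> \<rho> n) sequentially"
      using kn eventually_ge_at_top[of 1]
      by eventually_elim
        (use bound \<rho>_pos in \<open>simp add: minimax_rate_polynomial[OF 3] optimal_cutoff_polynomial[OF 3]\<close>)
    then show ?thesis using that by blast
  qed
qed

lemma eventually_optimal_cutoff_ge_1: "eventually (\<lambda>n. optimal_cutoff q p \<nu> \<rho> n \<ge> 1) sequentially"
proof (cases "q - p \<le> -1")
  case True
  have "1 / (\<nu> * q) > 0" using q\<nu>_pos by (simp add: mult.commute)
  then have "eventually (\<lambda>n. 1 \<le> (\<rho> * real n) powr (1 / (\<nu> * q))) sequentially"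
    using \<rho>_pos by real_asymp
  then show ?thesis using True by (simp add: optimal_cutoff_def)
next
  case False
  then have "q - p > -1" by simp
  moreover have "eventually (\<lambda>n. 1 \<le> (\<rho> * real n) powr (1 / D)) sequentially"
    using \<rho>_pos D_pos[OF \<open>q - p > -1\<close>] by real_asymp
  ultimately show ?thesis by (simp add: optimal_cutoff_polynomial)
qed

lemma eventually_minimax_rate_nonneg: "eventually (\<lambda>n. minimax_rate q p \<nu> \<rho> n \<ge> 0) sequentially"
proof (cases "q - p = -1")
  case True
  have "eventually (\<lambda>n. 0 \<le> ln (real n * \<rho>)) sequentially"
    using \<rho>_pos by real_asymp
  then show ?thesis
    by eventually_elim (use True in \<open>simp add: minimax_rate_def\<close>)
qed (simp add: minimax_rate_def)

end

section \<open>Oracle level and admissible cut-off sequences\<close>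

lemma asymp_ev_nat_ceiling:
  assumes "eventually (\<lambda>n. h n \<ge> 1) sequentially"
  shows "asymp_ev (\<lambda>n. real (nat \<lceil>h n\<rceil>)) h"
proof -
  have "eventually (\<lambda>n. 1 * h n \<le> real (nat \<lceil>h n\<rceil>) \<and> real (nat \<lceil>h n\<rceil>) \<le> 2 * h n) sequentially"
    using assms by eventually_elim linarith
  then show ?thesis
    unfolding asymp_ev_def by (intro exI[of _ 1] exI[of _ 2]) auto
qed

lemma asymp_ev_INF_of_bounds:
  fixes F :: "nat \<Rightarrow> nat \<Rightarrow> real" and g h :: "nat \<Rightarrow> real"
  assumes F_nonneg: "eventually (\<lambda>n. \<forall>k. F n k \<ge> 0) sequentially"
    and lower: "c > 0" "eventually (\<lambda>n. \<forall>k\<ge>1. c * g n \<le> F n k) sequentially"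
    and upper: "\<And>kn. asymp_ev (\<lambda>n. real (kn n)) h \<Longrightarrow> \<exists>C. eventually (\<lambda>n. F n (kn n) \<le> C * g n) sequentially"
    and h_ge_1: "eventually (\<lambda>n. h n \<ge> 1) sequentially"
    and g_nonneg: "eventually (\<lambda>n. g n \<ge> 0) sequentially"
  shows "asymp_ev (\<lambda>n. INF k\<in>{1..}. F n k) g \<and>
    (\<forall>kn. asymp_ev (\<lambda>n. real (kn n)) h \<longrightarrow> asymp_ev (\<lambda>n. F n (kn n)) (\<lambda>n. INF k\<in>{1..}. F n k))"
proof -
  have INF_lower: "eventually (\<lambda>n. c * g n \<le> (INF k\<in>{1..}. F n k)) sequentially"
    using lower(2) by eventually_elim (auto intro: cINF_greatest)
  have INF_upper: "eventually (\<lambda>n. (INF k\<in>{1..}. F n k) \<le> F n (kn n)) sequentially"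
    if admissible: "asymp_ev (\<lambda>n. real (kn n)) h" for kn
  proof -
    obtain c0 C0 where c0: "c0 > 0"
      and kn: "eventually (\<lambda>n. c0 * h n \<le> real (kn n) \<and> real (kn n) \<le> C0 * h n) sequentially"
      using admissible unfolding asymp_ev_def by blast
    have "eventually (\<lambda>n. kn n \<ge> 1) sequentially"
      using kn h_ge_1
    proof eventually_elim
      case (elim n)
      then have "real (kn n) > 0" using mult_pos_pos[OF c0, of "h n"] by linarith
      then show ?case by simp
    qed
    then show ?thesis
      using F_nonneg by eventually_elim (auto intro!: cINF_lower bdd_belowI[of _ 0])
  qed
  obtain C where C: "eventually (\<lambda>n. F n (nat \<lceil>h n\<rceil>) \<le> C * g n) sequentially"
    using upper[OF asymp_ev_nat_ceiling[OF h_ge_1]] by blast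
  have "eventually (\<lambda>n. c * g n \<le> (INF k\<in>{1..}. F n k) \<and> (INF k\<in>{1..}. F n k) \<le> max c C * g n) sequentially"
    using INF_lower INF_upper[OF asymp_ev_nat_ceiling[OF h_ge_1]] C g_nonneg
  proof eventually_elim
    case (elim n)
    have "C * g n \<le> max c C * g n" using elim(4) by (intro mult_right_mono) auto
    then show ?case using elim(1-3) by linarith
  qed
  then have optimal: "asymp_ev (\<lambda>n. INF k\<in>{1..}. F n k) g"
    unfolding asymp_ev_def using lower(1) by (intro exI[of _ c] exI[of _ "max c C"]) auto
  have "asymp_ev (\<lambda>n. F n (kn n)) (\<lambda>n. INF k\<in>{1..}. F n k)"
    if kn: "asymp_ev (\<lambda>n. real (kn n)) h" for kn
  proof -
    obtain C' where C': "eventually (\<lambda>n. F n (kn n) \<le> C' * g n) sequentially"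
      using upper[OF kn] by blast
    have "eventually (\<lambda>n. 1 * (INF k\<in>{1..}. F n k) \<le> F n (kn n)
        \<and> F n (kn n) \<le> max 1 (C' / c) * (INF k\<in>{1..}. F n k)) sequentially"
      using INF_lower INF_upper[OF kn] C' g_nonneg
    proof eventually_elim
      case (elim n)
      have "C' = C' / c * c" using lower(1) by simp
      also have "\<dots> \<le> max 1 (C' / c) * c" using lower(1) by (intro mult_right_mono) auto
      finally have "C' * g n \<le> max 1 (C' / c) * (c * g n)"
        using elim(4) by (simp add: mult_right_mono mult.assoc[symmetric])
      also have "\<dots> \<le> max 1 (C' / c) * (INF k\<in>{1..}. F n k)"
        using elim(1) by (intro mult_left_mono) auto
      finally show ?case using elim by simp
    qed
    then show ?thesis
      unfolding asymp_ev_def by (intro exI[of _ 1] exI[of _ "max 1 (C' / c)"]) auto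
  qed
  with optimal show ?thesis by blast
qed

lemma (in cutoff_rates) risk_asymptotics:
  assumes "eventually (\<lambda>n. \<forall>k. F n k = b k + V k / real n) sequentially"
  shows "asymp_ev (\<lambda>n. INF k\<in>{1..}. F n k) (minimax_rate q p \<nu> \<rho>) \<and>
    (\<forall>kn. asymp_ev (\<lambda>n. real (kn n)) (optimal_cutoff q p \<nu> \<rho>)
      \<longrightarrow> asymp_ev (\<lambda>n. F n (kn n)) (\<lambda>n. INF k\<in>{1..}. F n k))"
proof -
  obtain c where c: "c > 0"
    and bound: "eventually (\<lambda>n. \<forall>k\<ge>1. c * minimax_rate q p \<nu> \<rho> n \<le> b k + V k / real n) sequentially"
    by (rule minimax_rate_lower)
  have lower: "eventually (\<lambda>n. \<forall>k\<ge>1. c * minimax_rate q p \<nu> \<rho> n \<le> F n k) sequentially"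
    using bound assms by eventually_elim simp
  have F_nonneg: "eventually (\<lambda>n. \<forall>k. F n k \<ge> 0) sequentially"
    using assms by eventually_elim (simp add: b_nonneg V_nonneg)
  have upper: "\<exists>C. eventually (\<lambda>n. F n (kn n) \<le> C * minimax_rate q p \<nu> \<rho> n) sequentially"
    if admissible: "asymp_ev (\<lambda>n. real (kn n)) (optimal_cutoff q p \<nu> \<rho>)" for kn
  proof -
    obtain C where "eventually (\<lambda>n. b (kn n) + V (kn n) / real n \<le> C * minimax_rate q p \<nu> \<rho> n) sequentially"
      using minimax_rate_upper[OF admissible] by blast
    then have "eventually (\<lambda>n. F n (kn n) \<le> C * minimax_rate q p \<nu> \<rho> n) sequentially"
      using assms by eventually_elim simp
    then show ?thesis by blast
  qed
  show ?thesis
    by (rule asymp_ev_INF_of_bounds[OF F_nonneg c lower upper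
          eventually_optimal_cutoff_ge_1 eventually_minimax_rate_nonneg])
qed

lemma cutoff_rates_of_asymp_all:
  assumes "asymp_all b (\<lambda>k. real (Suc k) powr (- (q * \<nu>)))"
    and "asymp_all V (\<lambda>k. \<Sum>j<k. real (Suc j) powr (q - p))"
    and "q > 0" "\<nu> > 0" "\<rho> > 0"
  obtains cb Cb cV CV where "cutoff_rates b V q p \<nu> \<rho> cb Cb cV CV"
proof -
  obtain cb Cb where "0 < cb" "cb \<le> Cb" "\<And>k. cb * real (Suc k) powr (- (q * \<nu>)) \<le> b k"
    "\<And>k. b k \<le> Cb * real (Suc k) powr (- (q * \<nu>))"
    using asymp_allE[OF assms(1)] by blast
  moreover obtain cV CV where "0 < cV" "cV \<le> CV" "\<And>k. cV * (\<Sum>j<k. real (Suc j) powr (q - p)) \<le> V k"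
    "\<And>k. V k \<le> CV * (\<Sum>j<k. real (Suc j) powr (q - p))"
    using asymp_allE[OF assms(2)] by blast
  ultimately show ?thesis
    using assms(3-5) by (intro that[of cb Cb cV CV] cutoff_rates.intro) auto
qed

theorem theorem1:
  fixes M :: "'w measure"
    and K :: "'x::{real_inner,banach,second_countable_topology} \<Rightarrow> 'y::{real_inner,banach,second_countable_topology}"
    and \<sigma> :: "nat \<Rightarrow> real" and u :: "nat \<Rightarrow> 'y" and v :: "nat \<Rightarrow> 'x"
    and E :: "nat \<Rightarrow> 'w \<Rightarrow> 'y"
    and p q \<nu> \<rho> :: real
  assumes lin: "bounded_linear K"
    and cpt: "compact (closure (K ` cball 0 1))"
    and dense: "closure (range K) = UNIV"
    and u_basis: "orthonormal_basis_of u UNIV"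
    and v_basis: "orthonormal_basis_of v (ker_perp K)"
    and \<sigma>_pos: "\<And>j. \<sigma> j > 0"
    and \<sigma>_mono: "decseq \<sigma>"
    and \<sigma>_lim: "\<sigma> \<longlonglongrightarrow> 0"
    and svd: "\<And>j. K (v j) = \<sigma> j *\<^sub>R u j"
    and P: "prob_space M"
    and meas: "\<And>i. E i \<in> borel_measurable M"
    and indep: "prob_space.indep_vars M (\<lambda>_. borel) E UNIV"
    and ident: "\<And>i. distr M borel (E i) = distr M borel (E 0)"
    and integ: "integrable M (E 0)"
    and mean0: "(\<integral>\<omega>. E 0 \<omega> \<partial>M) = 0"
    and mom2: "integrable M (\<lambda>\<omega>. (norm (E 0 \<omega>))\<^sup>2)"
    and q_pos: "q > 0" and p_gt: "p > 1"
    and \<sigma>_rate: "asymp_all (\<lambda>j. (\<sigma> j)\<^sup>2) (\<lambda>j. real (Suc j) powr (- q))"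
    and noise_rate: "asymp_all (\<lambda>j. \<integral>\<omega>. (inner (E 0 \<omega>) (u j))\<^sup>2 \<partial>M) (\<lambda>j. real (Suc j) powr (- p))"
    and \<nu>_pos: "\<nu> > 0" and \<rho>_pos: "\<rho> > 0"
  shows "asymp_ev
           (\<lambda>n. INF k\<in>{1..}. SUP xh\<in>source_set \<sigma> v \<nu> \<rho>. sc_risk M K \<sigma> u v E xh n k)
           (\<lambda>n. if q - p < -1 then 1 / real n
                else if q - p = -1 then ln (real n * \<rho>) / real n
                else \<rho> powr ((q + 1 - p) / ((\<nu> + 1) * q + 1 - p))
                     * (1 / real n) powr (\<nu> / (\<nu> + 1 - (p - 1) / q)))
       \<and> (\<forall>kn :: nat \<Rightarrow> nat.
            asymp_ev (\<lambda>n. real (kn n))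
              (\<lambda>n. if q - p \<le> -1 then (\<rho> * real n) powr (1 / (\<nu> * q))
                   else (\<rho> * real n) powr (1 / ((1 + \<nu>) * q + 1 - p)))
            \<longrightarrow> asymp_ev
                 (\<lambda>n. SUP xh\<in>source_set \<sigma> v \<nu> \<rho>. sc_risk M K \<sigma> u v E xh n (kn n))
                 (\<lambda>n. INF k\<in>{1..}. SUP xh\<in>source_set \<sigma> v \<nu> \<rho>. sc_risk M K \<sigma> u v E xh n k))"
proof -
  have ou: "orthonormal_seq u" and ov: "orthonormal_seq v"
    using u_basis v_basis by (simp_all add: orthonormal_basis_of_def)
  interpret iid_noise M E
    using P meas indep ident integ mean0 mom2 by (intro iid_noise.intro iid_noise_axioms.intro)
  define V where "V k = (\<Sum>j<k. noise_var (u j) / (\<sigma> j)\<^sup>2)" for k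
  have worst_case: "eventually (\<lambda>n. \<forall>k. (SUP x\<in>source_set \<sigma> v \<nu> \<rho>. sc_risk M K \<sigma> u v E x n k)
      = \<rho>\<^sup>2 * (\<sigma> k powr \<nu>)\<^sup>2 + V k / real n) sequentially"
    using eventually_ge_at_top[of 1]
    by eventually_elim (use \<nu>_pos \<rho>_pos in \<open>simp add: V_def worst_case_sc_risk[OF lin ou ov \<sigma>_pos \<sigma>_mono svd]\<close>)
  have "asymp_all (\<lambda>k. \<rho>\<^sup>2 * (\<sigma> k powr \<nu>)\<^sup>2) (\<lambda>k. real (Suc k) powr (- (q * \<nu>)))"
    using bias_rate[OF \<sigma>_rate] \<nu>_pos \<rho>_pos by simp
  moreover have "asymp_all V (\<lambda>k. \<Sum>j<k. real (Suc j) powr (q - p))"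
    using variance_rate[OF \<sigma>_rate noise_rate] unfolding V_def noise_var_def .
  ultimately obtain cb Cb cV CV where "cutoff_rates (\<lambda>k. \<rho>\<^sup>2 * (\<sigma> k powr \<nu>)\<^sup>2) V q p \<nu> \<rho> cb Cb cV CV"
    using q_pos \<nu>_pos \<rho>_pos by (rule cutoff_rates_of_asymp_all)
  from cutoff_rates.risk_asymptotics[OF this worst_case] show ?thesis
    unfolding minimax_rate_def optimal_cutoff_def .
qed

end
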